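(* For every integer $i>1$, $\mathfrak{L}(\mathrm{rtDBVASIZE}(i-1))\subsetneq\mathfrak{L}(\mathrm{rtDBVASIZE}(i))$.
   Context: A real-time deterministic blind vector automaton of dimension $k$ ($\mathrm{rtDBVA}(k)$) is a 6-tuple $(Q,\Sigma,\delta,q_0,Q_a,v)$ with finite state set $Q$, initial state $q_0$, accept states $Q_a$, initial row vector $v\in\mathbb{Q}^k$ (freely chosen), and $\delta:Q\times(\Sigma\cup\{\cent,\$\})\to Q\times S$, $S$ the set of $k\times k$ rational matrices; the input $w$ is read as $\cent w\$$ left to right, one symbol per step, and $\delta(q,\sigma)=(q',M)$ means that in state $q$ reading $\sigma$ the machine goes to $q'$ and multiplies its row vector on the right by $M$. The input is accepted iff after processing $\$$ the state is in $Q_a$ and the first vector entry equals $1$. The size of an $m$-state $\mathrm{rtDBVA}(k)$ is $mk$. $\mathfrak{L}(\mathrm{rtDBVASIZE}(i))$ denotes the class of languages recognized by real-time deterministic blind vector automata of size $i$. *)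

theory Defs
  imports Complex_Main
begin

datatype 'a tsym = Cent | Dollar | Sym 'a

text \<open>Row vectors of dimension k are functions nat => rat (entries 0..k-1 relevant),
  k x k matrices are functions nat => nat => rat (entries with indices < k relevant).\<close>
definition vec_mat :: "nat \<Rightarrow> (nat \<Rightarrow> rat) \<Rightarrow> (nat \<Rightarrow> nat \<Rightarrow> rat) \<Rightarrow> (nat \<Rightarrow> rat)" where
  "vec_mat k v M = (\<lambda>j. \<Sum>i<k. v i * M i j)"

definition dbva_step ::
  "nat \<Rightarrow> (nat \<Rightarrow> 'a tsym \<Rightarrow> nat \<times> (nat \<Rightarrow> nat \<Rightarrow> rat)) \<Rightarrow> nat \<times> (nat \<Rightarrow> rat) \<Rightarrow> 'a tsym \<Rightarrow> nat \<times> (nat \<Rightarrow> rat)" where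
  "dbva_step k \<delta> c \<sigma> = (let (q', M) = \<delta> (fst c) \<sigma> in (q', vec_mat k (snd c) M))"

definition dbva_accepts ::
  "nat \<Rightarrow> (nat \<Rightarrow> 'a tsym \<Rightarrow> nat \<times> (nat \<Rightarrow> nat \<Rightarrow> rat)) \<Rightarrow> nat \<Rightarrow> nat set \<Rightarrow> (nat \<Rightarrow> rat) \<Rightarrow> 'a list \<Rightarrow> bool" where
  "dbva_accepts k \<delta> q0 Qa v w =
     (let c = foldl (dbva_step k \<delta>) (q0, v) ([Cent] @ map Sym w @ [Dollar])
      in fst c \<in> Qa \<and> snd c 0 = 1)"

definition dbva_wf ::
  "'a set \<Rightarrow> nat \<Rightarrow> nat \<Rightarrow> (nat \<Rightarrow> 'a tsym \<Rightarrow> nat \<times> (nat \<Rightarrow> nat \<Rightarrow> rat)) \<Rightarrow> nat \<Rightarrow> nat set \<Rightarrow> bool" where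
  "dbva_wf \<Sigma> m k \<delta> q0 Qa \<longleftrightarrow> 1 \<le> m \<and> 1 \<le> k \<and> q0 < m \<and> Qa \<subseteq> {..<m} \<and>
     (\<forall>q<m. \<forall>\<sigma>\<in>{Cent, Dollar} \<union> Sym ` \<Sigma>. fst (\<delta> q \<sigma>) < m)"

text \<open>Alphabets are finite nonempty sets of natural numbers (wlog, up to renaming).\<close>
definition rtDBVASIZE :: "nat \<Rightarrow> (nat set \<times> nat list set) set" where
  "rtDBVASIZE i = {(\<Sigma>, L). finite \<Sigma> \<and> \<Sigma> \<noteq> {} \<and> L \<subseteq> lists \<Sigma> \<and>
     (\<exists>m k \<delta> q0 Qa v. m * k = i \<and> dbva_wf \<Sigma> m k \<delta> q0 Qa \<and>
        (\<forall>w\<in>lists \<Sigma>. w \<in> L \<longleftrightarrow> dbva_accepts k \<delta> q0 Qa v w))}"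

end

theory Submission
  imports Defs
begin

text \<open>
  Inclusion: an automaton with m states and dimension k is simulated by a one-state
  automaton of any dimension d \<ge> m k, whose vector carries the old vector in the block
  belonging to the current state; the end-marker matrix collects the first entries of
  the accepting blocks.

  Strictness: the unary language of all words except those of length N = i - 2 is
  accepted by an ordinary i-state counter.  A one-state automaton of dimension i - 1
  reaches, after reading cent and a letters (a = 0, \<dots>, i - 1), i vectors that must
  satisfy a nontrivial linear relation.  Reading b further letters and the end-marker is
  linear, so the acceptance values [a + b \<noteq> N] satisfy the same relation for every b;
  but the rows of this 0-1 matrix are linearly independent.
\<close>

lemma linear_relation_exists:
  fixes P :: "'b \<Rightarrow> nat \<Rightarrow> 'a::field"
  assumes "finite A" "n < card A"
  shows "\<exists>c. (\<exists>a\<in>A. c a \<noteq> 0) \<and> (\<forall>j<n. (\<Sum>a\<in>A. c a * P a j) = 0)"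
  using assms
proof (induction n arbitrary: A P)
  case 0
  then obtain a where "a \<in> A" by fastforce
  then show ?case by (intro exI[of _ "\<lambda>_. 1"]) auto
next
  case (Suc n)
  show ?case
  proof (cases "\<forall>a\<in>A. P a n = 0")
    case True
    from Suc.prems obtain a1 where a1: "a1 \<in> A" by fastforce
    have "n < card (A - {a1})" using Suc.prems a1 by simp
    with Suc.IH[of "A - {a1}" P] Suc.prems obtain c where
      c: "\<exists>a\<in>A - {a1}. c a \<noteq> 0" "\<forall>j<n. (\<Sum>a\<in>A - {a1}. c a * P a j) = 0" by auto
    have sum_eq: "(\<Sum>a\<in>A. (c(a1 := 0)) a * P a j) = (\<Sum>a\<in>A - {a1}. c a * P a j)" for j
      using Suc.prems a1 by (simp add: sum.remove[of A a1])
    show ?thesis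
    proof (intro exI[of _ "c(a1 := 0)"] conjI allI impI)
      show "\<exists>a\<in>A. (c(a1 := 0)) a \<noteq> 0" using c(1) by auto
      fix j assume "j < Suc n"
      then show "(\<Sum>a\<in>A. (c(a1 := 0)) a * P a j) = 0"
        using sum_eq c(2) True by (cases "j = n") auto
    qed
  next
    case False
    then obtain a0 where a0: "a0 \<in> A" "P a0 n \<noteq> 0" by auto
    have "n < card (A - {a0})" using Suc.prems a0 by simp
    \<comment> \<open>Eliminate coordinate n using the pivot a0, then solve the smaller system.\<close>
    define Q where "Q a j = P a j * P a0 n - P a0 j * P a n" for a j
    from Suc.IH[of "A - {a0}" Q] Suc.prems \<open>n < card (A - {a0})\<close> obtain \<mu> where
      \<mu>: "\<exists>a\<in>A - {a0}. \<mu> a \<noteq> 0" "\<forall>j<n. (\<Sum>a\<in>A - {a0}. \<mu> a * Q a j) = 0" by auto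
    define c where
      "c a = (if a = a0 then - (\<Sum>b\<in>A - {a0}. \<mu> b * P b n) else \<mu> a * P a0 n)" for a
    have sum_eq: "(\<Sum>a\<in>A. c a * P a j) = (\<Sum>a\<in>A - {a0}. \<mu> a * Q a j)" for j
    proof -
      have "(\<Sum>a\<in>A. c a * P a j) = c a0 * P a0 j + (\<Sum>a\<in>A - {a0}. c a * P a j)"
        using Suc.prems a0 by (simp add: sum.remove[of A a0])
      also have "\<dots> = - (\<Sum>b\<in>A - {a0}. \<mu> b * P b n * P a0 j)
                      + (\<Sum>a\<in>A - {a0}. \<mu> a * P a0 n * P a j)"
        by (simp add: c_def sum_distrib_right)
      also have "\<dots> = (\<Sum>a\<in>A - {a0}. \<mu> a * Q a j)"
        by (simp add: Q_def sum_subtractf[symmetric] algebra_simps)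
      finally show ?thesis .
    qed
    show ?thesis
    proof (intro exI[of _ c] conjI allI impI)
      show "\<exists>a\<in>A. c a \<noteq> 0" using \<mu>(1) a0 by (auto simp: c_def)
      fix j assume "j < Suc n"
      then show "(\<Sum>a\<in>A. c a * P a j) = 0"
        using \<mu>(2) unfolding sum_eq by (cases "j = n") (auto simp: Q_def)
    qed
  qed
qed

lemma avoiding_rows_independent:
  fixes f :: "nat \<Rightarrow> nat \<Rightarrow> 'a::idom"
  assumes f: "\<And>a b. a \<le> Suc N \<Longrightarrow> f a b = 1 \<longleftrightarrow> a + b \<noteq> N"
    and rel: "\<And>b. (\<Sum>a\<le>Suc N. c a * f a b) = 0"
    and "a \<le> Suc N"
  shows "c a = 0"
proof -
  have total: "(\<Sum>a\<le>Suc N. c a) = 0"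
    using rel[of "Suc N"] f[of _ "Suc N"] by (simp del: sum.atMost_Suc)
  have low: "c a = 0" if "a \<le> N" for a
  proof -
    \<comment> \<open>Subtracting the row b = N + 1 leaves a single nonzero term in row b = N - a.\<close>
    have "c a * (f a (N - a) - 1) = (\<Sum>a'\<in>{a}. c a' * (f a' (N - a) - 1))"
      by simp
    also have "\<dots> = (\<Sum>a'\<le>Suc N. c a' * (f a' (N - a) - 1))"
      using that f by (intro sum.mono_neutral_left) auto
    also have "\<dots> = (\<Sum>a'\<le>Suc N. c a' * f a' (N - a)) - (\<Sum>a'\<le>Suc N. c a')"
      by (simp add: algebra_simps sum_subtractf del: sum.atMost_Suc)
    also have "\<dots> = 0"
      using rel total by simp
    finally show ?thesis
      using that f[of a "N - a"] by simp
  qed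
  have "c (Suc N) = 0"
    using total low by simp
  with low \<open>a \<le> Suc N\<close> show ?thesis
    by (cases "a = Suc N") auto
qed

lemma foldl_dbva_step_one_state:
  "foldl (dbva_step d (\<lambda>_ \<sigma>. (0, N \<sigma>))) c xs
     = (if xs = [] then fst c else 0, foldl (vec_mat d) (snd c) (map N xs))"
  by (induction xs arbitrary: c) (auto simp: dbva_step_def)

lemma dbva_accepts_one_state:
  "dbva_accepts d (\<lambda>_ \<sigma>. (0, N \<sigma>)) 0 {0} V w
     \<longleftrightarrow> foldl (vec_mat d) V (map N (Cent # map Sym w @ [Dollar])) 0 = 1"
  unfolding dbva_accepts_def foldl_dbva_step_one_state by simp

text \<open>Index q * k + j of the simulating vector holds entry j of the simulated vector
  while the simulated automaton is in state q.\<close>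

definition block_vec :: "nat \<Rightarrow> nat \<Rightarrow> nat \<Rightarrow> (nat \<Rightarrow> rat) \<Rightarrow> nat \<Rightarrow> rat" where
  "block_vec m k q w x = (if x < m * k \<and> x div k = q then w (x mod k) else 0)"

definition block_mat ::
  "nat \<Rightarrow> nat \<Rightarrow> (nat \<Rightarrow> 'a tsym \<Rightarrow> nat \<times> (nat \<Rightarrow> nat \<Rightarrow> rat)) \<Rightarrow> nat set \<Rightarrow> 'a tsym
     \<Rightarrow> nat \<Rightarrow> nat \<Rightarrow> rat" where
  "block_mat m k \<delta> Qa \<sigma> x y =
    (if x < m * k then
      (case \<sigma> of
        Dollar \<Rightarrow>
          (if y = 0 \<and> fst (\<delta> (x div k) Dollar) \<in> Qa
           then snd (\<delta> (x div k) Dollar) (x mod k) 0 else 0)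
      | _ \<Rightarrow> block_vec m k (fst (\<delta> (x div k) \<sigma>)) (snd (\<delta> (x div k) \<sigma>) (x mod k)) y)
     else 0)"

lemma block_index_less: "q < m \<Longrightarrow> j < k \<Longrightarrow> q * k + j < m * (k::nat)"
proof -
  assume "q < m" "j < k"
  then have "q * k + j < Suc q * k" by simp
  also have "\<dots> \<le> m * k" using \<open>q < m\<close> by (intro mult_right_mono) auto
  finally show ?thesis .
qed

lemma sum_block_vec:
  assumes "q < m" "m * k \<le> d"
  shows "(\<Sum>x<d. block_vec m k q w x * f x) = (\<Sum>j<k. w j * f (q * k + j))"
proof -
  have inj: "inj_on (\<lambda>j. q * k + j) {..<k}" by (auto simp: inj_on_def)
  have "(\<Sum>j<k. w j * f (q * k + j)) = (\<Sum>j<k. block_vec m k q w (q * k + j) * f (q * k + j))"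
    using block_index_less[OF assms(1)] by (intro sum.cong) (auto simp: block_vec_def)
  also have "\<dots> = (\<Sum>x\<in>(\<lambda>j. q * k + j) ` {..<k}. block_vec m k q w x * f x)"
    by (simp add: sum.reindex[OF inj])
  also have "\<dots> = (\<Sum>x<d. block_vec m k q w x * f x)"
  proof (rule sum.mono_neutral_left)
    show "(\<lambda>j. q * k + j) ` {..<k} \<subseteq> {..<d}"
      using block_index_less[OF assms(1)] assms(2) by fastforce
    show "\<forall>x\<in>{..<d} - (\<lambda>j. q * k + j) ` {..<k}. block_vec m k q w x * f x = 0"
    proof
      fix x assume x: "x \<in> {..<d} - (\<lambda>j. q * k + j) ` {..<k}"
      show "block_vec m k q w x * f x = 0"
      proof (cases "x < m * k \<and> x div k = q")
        case True
        then have "x = q * k + x mod k" "x mod k < k"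
          by (metis div_mult_mod_eq mult.commute, cases "k = 0") auto
        then show ?thesis using x by blast
      qed (auto simp: block_vec_def)
    qed
  qed simp
  finally show ?thesis by simp
qed

lemma vec_mat_block_mat:
  assumes "q < m" "m * k \<le> d" "\<sigma> \<noteq> Dollar" "\<delta> q \<sigma> = (q', M)"
  shows "vec_mat d (block_vec m k q w) (block_mat m k \<delta> Qa \<sigma>) = block_vec m k q' (vec_mat k w M)"
proof
  fix y
  have "vec_mat d (block_vec m k q w) (block_mat m k \<delta> Qa \<sigma>) y
        = (\<Sum>j<k. w j * block_mat m k \<delta> Qa \<sigma> (q * k + j) y)"
    unfolding vec_mat_def using sum_block_vec[OF assms(1,2)] by simp
  also have "\<dots> = (\<Sum>j<k. w j * block_vec m k q' (M j) y)"
    using block_index_less[OF assms(1)] assms(3,4)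
    by (intro sum.cong refl) (cases \<sigma>; simp add: block_mat_def)
  also have "\<dots> = block_vec m k q' (vec_mat k w M) y"
    by (auto simp: block_vec_def vec_mat_def)
  finally show "vec_mat d (block_vec m k q w) (block_mat m k \<delta> Qa \<sigma>) y
                = block_vec m k q' (vec_mat k w M) y" .
qed

lemma vec_mat_block_mat_Dollar:
  assumes "q < m" "m * k \<le> d" "\<delta> q Dollar = (q', M)"
  shows "vec_mat d (block_vec m k q w) (block_mat m k \<delta> Qa Dollar) 0
           = (if q' \<in> Qa then vec_mat k w M 0 else 0)"
proof -
  have "vec_mat d (block_vec m k q w) (block_mat m k \<delta> Qa Dollar) 0
        = (\<Sum>j<k. w j * block_mat m k \<delta> Qa Dollar (q * k + j) 0)"
    unfolding vec_mat_def using sum_block_vec[OF assms(1,2)] by simp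
  also have "\<dots> = (\<Sum>j<k. w j * (if q' \<in> Qa then M j 0 else 0))"
    using block_index_less[OF assms(1)] assms(3)
    by (intro sum.cong refl) (simp add: block_mat_def)
  also have "\<dots> = (if q' \<in> Qa then vec_mat k w M 0 else 0)"
    by (simp add: vec_mat_def)
  finally show ?thesis .
qed

lemma foldl_block_mat:
  assumes wf: "dbva_wf \<Sigma> m k \<delta> q0 Qa" and d: "m * k \<le> d"
  shows "u \<in> lists \<Sigma> \<Longrightarrow> q < m \<Longrightarrow>
    foldl (vec_mat d) (block_vec m k q w) (map (block_mat m k \<delta> Qa \<circ> Sym) u)
      = block_vec m k (fst (foldl (dbva_step k \<delta>) (q, w) (map Sym u)))
                      (snd (foldl (dbva_step k \<delta>) (q, w) (map Sym u)))
    \<and> fst (foldl (dbva_step k \<delta>) (q, w) (map Sym u)) < m"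
proof (induction u arbitrary: q w)
  case (Cons a u)
  obtain q' M where qM: "\<delta> q (Sym a) = (q', M)" by fastforce
  have "q' < m"
    using wf Cons.prems qM unfolding dbva_wf_def by (metis UnI2 fst_conv image_eqI listsE)
  have step: "vec_mat d (block_vec m k q w) (block_mat m k \<delta> Qa (Sym a))
                 = block_vec m k q' (vec_mat k w M)"
    using vec_mat_block_mat[of q m k d "Sym a" \<delta> q' M] Cons.prems(2) d qM by simp
  have "dbva_step k \<delta> (q, w) (Sym a) = (q', vec_mat k w M)"
    by (simp add: dbva_step_def qM)
  then show ?case using Cons.IH[OF _ \<open>q' < m\<close>, of "vec_mat k w M"] Cons.prems step by simp
qed simp

lemma dbva_accepts_block_simulation:
  assumes wf: "dbva_wf \<Sigma> m k \<delta> q0 Qa" and d: "m * k \<le> d" and w: "w \<in> lists \<Sigma>"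
  shows "foldl (vec_mat d) (block_vec m k q0 v) (map (block_mat m k \<delta> Qa) (Cent # map Sym w @ [Dollar])) 0 = 1
           \<longleftrightarrow> dbva_accepts k \<delta> q0 Qa v w"
proof -
  obtain q1 M1 where c1: "\<delta> q0 Cent = (q1, M1)" by fastforce
  have q0: "q0 < m" using wf by (simp add: dbva_wf_def)
  have q1: "q1 < m" using wf c1 q0 unfolding dbva_wf_def by (metis fst_conv insertI1 UnI1)
  have cent: "vec_mat d (block_vec m k q0 v) (block_mat m k \<delta> Qa Cent) = block_vec m k q1 (vec_mat k v M1)"
    using vec_mat_block_mat[of q0 m k d Cent \<delta> q1 M1] q0 d c1 by simp
  define c2 where "c2 = foldl (dbva_step k \<delta>) (q1, vec_mat k v M1) (map Sym w)"
  have word: "foldl (vec_mat d) (block_vec m k q1 (vec_mat k v M1)) (map (block_mat m k \<delta> Qa \<circ> Sym) w)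
                = block_vec m k (fst c2) (snd c2)" "fst c2 < m"
    using foldl_block_mat[OF wf d w q1] unfolding c2_def by auto
  obtain q3 M3 where c3: "\<delta> (fst c2) Dollar = (q3, M3)" by fastforce
  have "foldl (vec_mat d) (block_vec m k q0 v) (map (block_mat m k \<delta> Qa) (Cent # map Sym w @ [Dollar])) 0
          = (if q3 \<in> Qa then vec_mat k (snd c2) M3 0 else 0)"
    using cent word vec_mat_block_mat_Dollar[of "fst c2" m k d \<delta> q3 M3] word(2) d c3 by simp
  moreover have "dbva_accepts k \<delta> q0 Qa v w \<longleftrightarrow> q3 \<in> Qa \<and> vec_mat k (snd c2) M3 0 = 1"
    unfolding dbva_accepts_def using c1 c3 by (simp add: c2_def dbva_step_def)
  ultimately show ?thesis by auto
qed

lemma rtDBVASIZE_one_state_normal_form: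
  assumes "(\<Sigma>, L) \<in> rtDBVASIZE s" "s \<le> d"
  obtains V N where
    "\<forall>w\<in>lists \<Sigma>. w \<in> L \<longleftrightarrow> foldl (vec_mat d) V (map N (Cent # map Sym w @ [Dollar])) 0 = 1"
proof -
  from assms(1) obtain m k \<delta> q0 Qa v where "m * k = s" and wf: "dbva_wf \<Sigma> m k \<delta> q0 Qa"
    and L: "\<forall>w\<in>lists \<Sigma>. w \<in> L \<longleftrightarrow> dbva_accepts k \<delta> q0 Qa v w"
    unfolding rtDBVASIZE_def by blast
  with assms(2) have "m * k \<le> d" by simp
  with that[of "block_vec m k q0 v" "block_mat m k \<delta> Qa"] show ?thesis
    using L dbva_accepts_block_simulation[OF wf] by blast
qed

lemma rtDBVASIZE_mono:
  assumes "s \<le> t"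
  shows "rtDBVASIZE s \<subseteq> rtDBVASIZE t"
proof
  fix x assume "x \<in> rtDBVASIZE s"
  then obtain \<Sigma> L where x: "x = (\<Sigma>, L)" and mem: "(\<Sigma>, L) \<in> rtDBVASIZE s"
    by (cases x) auto
  obtain V N where acc:
    "\<forall>w\<in>lists \<Sigma>. w \<in> L \<longleftrightarrow> foldl (vec_mat t) V (map N (Cent # map Sym w @ [Dollar])) 0 = 1"
    using rtDBVASIZE_one_state_normal_form[OF mem assms] .
  have "0 < s"
    using mem by (auto simp: rtDBVASIZE_def dbva_wf_def)
  with assms have "dbva_wf \<Sigma> 1 t (\<lambda>_ \<sigma>. (0, N \<sigma>)) 0 {0}"
    by (simp add: dbva_wf_def)
  moreover have "\<forall>w\<in>lists \<Sigma>. w \<in> L \<longleftrightarrow> dbva_accepts t (\<lambda>_ \<sigma>. (0, N \<sigma>)) 0 {0} V w"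
    using acc by (simp add: dbva_accepts_one_state)
  moreover have "1 * t = t" by simp
  ultimately show "x \<in> rtDBVASIZE t"
    using mem unfolding x rtDBVASIZE_def by blast
qed

lemma foldl_vec_mat_sum:
  "foldl (vec_mat d) (\<lambda>y. \<Sum>a\<in>A. c a * P a y) Ms = (\<lambda>y. \<Sum>a\<in>A. c a * foldl (vec_mat d) (P a) Ms y)"
proof (induction Ms arbitrary: P)
  case (Cons M Ms)
  have "vec_mat d (\<lambda>y. \<Sum>a\<in>A. c a * P a y) M = (\<lambda>y. \<Sum>a\<in>A. c a * vec_mat d (P a) M y)"
    unfolding vec_mat_def
    by (auto simp: sum_distrib_right sum_distrib_left mult.assoc intro!: ext sum.swap)
  then show ?case using Cons.IH[of "\<lambda>a. vec_mat d (P a) M"] by simp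
qed simp

lemma foldl_vec_mat_zero: "foldl (vec_mat d) (\<lambda>_. 0) Ms = (\<lambda>_. 0)"
  by (induction Ms) (auto simp: vec_mat_def)

lemma foldl_vec_mat_vanishing:
  assumes "\<forall>y<d. C y = 0" "Ms \<noteq> []"
  shows "foldl (vec_mat d) C Ms = (\<lambda>_. 0)"
proof -
  obtain M Ms' where "Ms = M # Ms'" using assms(2) by (cases Ms) auto
  moreover have "vec_mat d C M = (\<lambda>_. 0)" using assms(1) by (auto simp: vec_mat_def)
  ultimately show ?thesis by (simp add: foldl_vec_mat_zero)
qed

definition counter :: "nat \<Rightarrow> nat \<Rightarrow> 'a tsym \<Rightarrow> nat \<times> (nat \<Rightarrow> nat \<Rightarrow> rat)" where
  "counter N q \<sigma> = (case \<sigma> of Sym _ \<Rightarrow> min (Suc q) (Suc N) | _ \<Rightarrow> q, \<lambda>_ _. 1)"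

lemma foldl_counter:
  "q \<le> Suc N \<Longrightarrow> foldl (dbva_step 1 (counter N)) (q, \<lambda>_. 1) (map Sym u)
     = (min (q + length u) (Suc N), \<lambda>_. 1)"
  by (induction u arbitrary: q) (auto simp: dbva_step_def counter_def vec_mat_def min_def)

lemma dbva_accepts_counter:
  "dbva_accepts 1 (counter N) 0 Qa (\<lambda>_. 1) w \<longleftrightarrow> min (length w) (Suc N) \<in> Qa"
proof -
  have markers: "dbva_step 1 (counter N) (q, \<lambda>_. 1) \<sigma> = (q, \<lambda>_. 1)"
    if "\<sigma> \<in> {Cent, Dollar}" for q \<sigma>
    using that by (auto simp: dbva_step_def counter_def vec_mat_def)
  have "foldl (dbva_step 1 (counter N)) (0, \<lambda>_. 1) ([Cent] @ map Sym w @ [Dollar])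
          = (min (length w) (Suc N), \<lambda>_. 1)"
    using foldl_counter[of 0 N w] by (simp add: markers del: One_nat_def)
  then show ?thesis
    unfolding dbva_accepts_def by (simp del: One_nat_def)
qed

definition unary_except_length :: "nat \<Rightarrow> nat list set" where
  "unary_except_length N = {w \<in> lists {0}. length w \<noteq> N}"

lemma unary_except_length_in_rtDBVASIZE:
  "({0}, unary_except_length N) \<in> rtDBVASIZE (Suc (Suc N))"
proof -
  have "dbva_wf {0} (Suc (Suc N)) 1 (counter N) 0 ({..Suc N} - {N})"
    by (auto simp: dbva_wf_def counter_def split: tsym.splits)
  moreover have "\<forall>w\<in>lists {0}. w \<in> unary_except_length N
                   \<longleftrightarrow> dbva_accepts 1 (counter N) 0 ({..Suc N} - {N}) (\<lambda>_. 1) w"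
    by (simp add: dbva_accepts_counter unary_except_length_def min_def del: One_nat_def)
  moreover have "Suc (Suc N) * 1 = Suc (Suc N)" by simp
  moreover have "unary_except_length N \<subseteq> lists {0}"
    by (auto simp: unary_except_length_def)
  ultimately show ?thesis
    unfolding rtDBVASIZE_def by blast
qed


lemma unary_except_length_notin_rtDBVASIZE:
  "({0}, unary_except_length N) \<notin> rtDBVASIZE (Suc N)"
proof
  let ?d = "Suc N"
  assume "({0}, unary_except_length N) \<in> rtDBVASIZE ?d"
  then obtain V M where acc: "\<forall>w\<in>lists {0}. w \<in> unary_except_length N
      \<longleftrightarrow> foldl (vec_mat ?d) V (map M (Cent # map Sym w @ [Dollar])) 0 = 1"
    using rtDBVASIZE_one_state_normal_form by blast
  define P where "P a = foldl (vec_mat ?d) V (map M (Cent # replicate a (Sym 0)))" for a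
  define F where "F b U = foldl (vec_mat ?d) U (map M (replicate b (Sym 0) @ [Dollar])) 0" for b U
  have unary: "replicate n 0 \<in> lists {0}" for n
    by (induction n) auto
  have accepted: "F b (P a) = 1 \<longleftrightarrow> a + b \<noteq> N" for a b
    using acc[rule_format, OF unary[of "a + b"]]
    by (simp add: P_def F_def replicate_add unary_except_length_def unary)
  obtain c where c: "\<exists>a\<in>{..Suc N}. c a \<noteq> 0" "\<forall>j<?d. (\<Sum>a\<le>Suc N. c a * P a j) = 0"
    using linear_relation_exists[of "{..Suc N}" ?d P] by auto
  have "(\<Sum>a\<le>Suc N. c a * F b (P a)) = 0" for b
  proof -
    have "(\<Sum>a\<le>Suc N. c a * F b (P a))
          = foldl (vec_mat ?d) (\<lambda>y. \<Sum>a\<le>Suc N. c a * P a y) (map M (replicate b (Sym 0) @ [Dollar])) 0"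
      unfolding F_def foldl_vec_mat_sum by simp
    also have "\<dots> = 0"
      using foldl_vec_mat_vanishing[of ?d "\<lambda>y. \<Sum>a\<le>Suc N. c a * P a y"] c(2)
      by (simp del: map_append foldl_append)
    finally show ?thesis .
  qed
  with accepted have "c a = 0" if "a \<le> Suc N" for a
    using avoiding_rows_independent[of N "\<lambda>a b. F b (P a)" c a] that by blast
  with c(1) show False by auto
qed

theorem theorem12:
  fixes i :: nat
  assumes "i > 1"
  shows "rtDBVASIZE (i - 1) \<subset> rtDBVASIZE i"
proof -
  obtain N where i: "i = Suc (Suc N)"
    using assms by (auto dest: less_imp_Suc_add)
  have "rtDBVASIZE (i - 1) \<subseteq> rtDBVASIZE i"
    by (rule rtDBVASIZE_mono) simp
  moreover have "({0}, unary_except_length N) \<in> rtDBVASIZE i - rtDBVASIZE (i - 1)"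
    using unary_except_length_in_rtDBVASIZE unary_except_length_notin_rtDBVASIZE i by simp
  ultimately show ?thesis by blast
qed

end
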